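(* Let $\mathscr T$ be a functor satisfying (T1)–(T4), let $\mathcal M_1,\mathcal M_2$ be complete orthomodular lattices and $k\colon\mathcal M_1\to\mathcal M_2$ an ortholattice isomorphism. Then the map $\Gamma(k)\colon\Gamma(\mathcal M_1)\to\Gamma(\mathcal M_2)$, $\Gamma(k)(A)=\{k\circ a\circ k^{-1}\mid a\in A\}$, is a $\mathscr T\mathbb{ODA}$-morphism, i.e. a bijective morphism of involutive generalized dynamic algebras.
   Context: $\Gamma(\mathcal M)=\mathscr P(\mathscr T(\mathbf{Lin}(\mathcal M)))$. An involutive unital quantale is $(Q,\bigsqcup,\odot,{}^*,e)$: complete join-semilattice $Q$, associative $\odot$ distributing over arbitrary joins in each argument, unit $e$, ${}^*$ with $x^{**}=x$, $(x\odot y)^*=y^*\odot x^*$, $(\bigsqcup x_i)^*=\bigsqcup x_i^*$. An involutive generalized dynamic algebra (IDA) is such a quantale with ${\sim}\colon K\to K$ satisfying, for all $x,y$ and families $(x_i)$: ${\sim}(x\odot{\sim}{\sim}y)={\sim}(x\odot y)$; ${\sim}(\bigsqcup{\sim}{\sim}x_i)={\sim}(\bigsqcup x_i)$; $({\sim}x)^*={\sim}x$; ${\sim}{\sim}({\sim}{\sim}x\odot y)={\sim}({\sim}x\sqcup{\sim}({\sim}x\sqcup y))$. Test set $\widetilde K=\{{\sim}k\}$; $\bigvee W={\sim}{\sim}\bigsqcup W$; $w^\perp={\sim}w$; $k\preceq l$ iff $\bigvee\{k,l\}=l$; $k\bullet v={\sim}{\sim}(k\odot v)$; $k\equiv l$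 iff $k\bullet w=l\bullet w$ for all $w\in\widetilde K$. A morphism of IDAs preserves arbitrary joins, $\odot$, ${}^*$, unit, ${\sim}$ (category $\mathbb{IDA}$); semi-Foulis means $(\widetilde K,\preceq,{}^\perp)$ is a complete orthomodular lattice. $\mathbb{IM}$: involutive monoids and homomorphisms. For a complete orthomodular lattice $\mathcal M$: $\pi_m(x)=m\wedge(m^\perp\vee x)$; $\mathbf{Lin}(\mathcal M)$ is the set of maps $f$ admitting $f^*$ with $f(x)\le y^\perp\iff x\le f^*(y)^\perp$, an IDA under pointwise joins, composition, ${}^*$, $\mathrm{id}$, ${\sim}f=\pi_{f(1)^\perp}$. For an involutive submonoid $L\supseteq\{\pi_m\}$, $\mathscr P(L)$ is the IDA of subsets of $L$ with union, setwise composition $A\odot B=\{a\circ b\}$, $A^*=\{a^*\}$, unit $\{\mathrm{id}_M\}$, ${\sim}A=\{\pi_{(\bigvee_{a\in A}a(1))^\perp}\}$. $\mathscr T\colon\mathbb{IDA}\to\mathbb{IM}$ satisfies: (T1) $\widetilde K\subseteq\mathscr T(K)\subseteq K$, $\mathscr T(K)$ an involutive submonoid; (T2) for semi-Foulis $\mathfrak K$ with $s=t\iff s\equiv t$ on $\mathscr T(K)$, $k\mapsto k\bullet(-)$ is an isomorphism $\mathscr T(\mathfrak K)\to\mathscr T(\mathbf{Lin}(\widetilde{\mathfrak K}))$; (T3) $f\mapsto\{f\}$ is an isomorphism $\mathscr T(\mathbf{Lin}(\mathcal M))\to\mathscr T(\mathscr P(\mathscr T(\mathbf{Lin}(\mathcal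 M))))$; (T4) $\mathscr T(f)$ is the restriction of $f$. An ortholattice isomorphism is a bijection $g$ with $m\le n\iff g(m)\le g(n)$ and $g(m^\perp)=g(m)^\perp$. *)

theory Defs
  imports Main
begin

definition complete_oml :: "('a::complete_lattice \<Rightarrow> 'a) \<Rightarrow> bool" where
  "complete_oml perp \<longleftrightarrow>
     (\<forall>x. perp (perp x) = x) \<and>
     (\<forall>x y. x \<le> y \<longrightarrow> perp y \<le> perp x) \<and>
     (\<forall>x. inf x (perp x) = bot) \<and>
     (\<forall>x. sup x (perp x) = top) \<and>
     (\<forall>x y. x \<le> y \<longrightarrow> y = sup x (inf y (perp x)))"

definition ortho_iso :: "('a::complete_lattice \<Rightarrow> 'a) \<Rightarrow> ('b::complete_lattice \<Rightarrow> 'b) \<Rightarrow> ('a \<Rightarrow> 'b) \<Rightarrow> bool" where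
  "ortho_iso perp1 perp2 g \<longleftrightarrow> bij g \<and> (\<forall>m n. m \<le> n \<longleftrightarrow> g m \<le> g n) \<and> (\<forall>m. g (perp1 m) = perp2 (g m))"

definition sasaki :: "('a::complete_lattice \<Rightarrow> 'a) \<Rightarrow> 'a \<Rightarrow> 'a \<Rightarrow> 'a" where
  "sasaki perp m x = inf m (sup (perp m) x)"

definition is_adjoint :: "('a::complete_lattice \<Rightarrow> 'a) \<Rightarrow> ('a \<Rightarrow> 'a) \<Rightarrow> ('a \<Rightarrow> 'a) \<Rightarrow> bool" where
  "is_adjoint perp f g \<longleftrightarrow> (\<forall>x y. f x \<le> perp y \<longleftrightarrow> x \<le> perp (g y))"

definition is_Lin :: "('a::complete_lattice \<Rightarrow> 'a) \<Rightarrow> ('a \<Rightarrow> 'a) \<Rightarrow> bool" where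
  "is_Lin perp f \<longleftrightarrow> (\<exists>g. is_adjoint perp f g)"

definition adj :: "('a::complete_lattice \<Rightarrow> 'a) \<Rightarrow> ('a \<Rightarrow> 'a) \<Rightarrow> ('a \<Rightarrow> 'a)" where
  "adj perp f = (SOME g. is_adjoint perp f g)"

record 'k ida =
  ida_carrier :: "'k set"
  ida_join :: "'k set \<Rightarrow> 'k"
  ida_mult :: "'k \<Rightarrow> 'k \<Rightarrow> 'k"
  ida_star :: "'k \<Rightarrow> 'k"
  ida_unit :: 'k
  ida_tilde :: "'k \<Rightarrow> 'k"

definition ida_hom :: "'k ida \<Rightarrow> 'l ida \<Rightarrow> ('k \<Rightarrow> 'l) \<Rightarrow> bool" where
  "ida_hom K L h \<longleftrightarrow>
     (\<forall>x\<in>ida_carrier K. h x \<in> ida_carrier L) \<and>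
     (\<forall>S. S \<subseteq> ida_carrier K \<longrightarrow> h (ida_join K S) = ida_join L (h ` S)) \<and>
     (\<forall>x\<in>ida_carrier K. \<forall>y\<in>ida_carrier K. h (ida_mult K x y) = ida_mult L (h x) (h y)) \<and>
     (\<forall>x\<in>ida_carrier K. h (ida_star K x) = ida_star L (h x)) \<and>
     h (ida_unit K) = ida_unit L \<and>
     (\<forall>x\<in>ida_carrier K. h (ida_tilde K x) = ida_tilde L (h x))"

definition tests :: "'k ida \<Rightarrow> 'k set" where
  "tests K = ida_tilde K ` ida_carrier K"

definition Lin :: "('a::complete_lattice \<Rightarrow> 'a) \<Rightarrow> ('a \<Rightarrow> 'a) ida" where
  "Lin perp = \<lparr> ida_carrier = {f. is_Lin perp f},
               ida_join = (\<lambda>F. (\<lambda>x. SUP f\<in>F. f x)),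
               ida_mult = (\<circ>),
               ida_star = adj perp,
               ida_unit = id,
               ida_tilde = (\<lambda>f. sasaki perp (perp (f top))) \<rparr>"

text \<open>The IDA P(L) of subsets of an involutive submonoid L of Lin(M).\<close>
definition Pset :: "('a::complete_lattice \<Rightarrow> 'a) \<Rightarrow> ('a \<Rightarrow> 'a) set \<Rightarrow> ('a \<Rightarrow> 'a) set ida" where
  "Pset perp L = \<lparr> ida_carrier = Pow L,
               ida_join = Union,
               ida_mult = (\<lambda>A B. {a \<circ> b | a b. a \<in> A \<and> b \<in> B}),
               ida_star = (\<lambda>A. adj perp ` A),
               ida_unit = {id},
               ida_tilde = (\<lambda>A. {sasaki perp (perp (SUP a\<in>A. a top))}) \<rparr>"

text \<open>Condition (T1) for the value TK of the functor at K.\<close>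
definition T1_at :: "'k ida \<Rightarrow> 'k set \<Rightarrow> bool" where
  "T1_at K TK \<longleftrightarrow> tests K \<subseteq> TK \<and> TK \<subseteq> ida_carrier K \<and>
     ida_unit K \<in> TK \<and>
     (\<forall>x\<in>TK. \<forall>y\<in>TK. ida_mult K x y \<in> TK) \<and>
     (\<forall>x\<in>TK. ida_star K x \<in> TK)"

text \<open>Functoriality with (T4) between K and L: for every IDA morphism h : K \<rightarrow> L,
  T(h) is the restriction of h, a monoid morphism T(K) \<rightarrow> T(L); in particular h maps T(K) into T(L).\<close>
definition T4_between :: "'k ida \<Rightarrow> 'k set \<Rightarrow> 'l ida \<Rightarrow> 'l set \<Rightarrow> bool" where
  "T4_between K TK L TL \<longleftrightarrow> (\<forall>h. ida_hom K L h \<longrightarrow> h ` TK \<subseteq> TL)"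

definition Gamma_map :: "('a \<Rightarrow> 'b) \<Rightarrow> ('a \<Rightarrow> 'a) set \<Rightarrow> ('b \<Rightarrow> 'b) set" where
  "Gamma_map k A = (\<lambda>a. k \<circ> a \<circ> inv k) ` A"

end

theory Submission
  imports Defs
begin

text \<open>Conjugation \<open>f \<mapsto> k \<circ> f \<circ> k\<inverse>\<close> by an ortholattice isomorphism \<open>k\<close> commutes with
  pointwise joins, composition, the identity, Sasaki projections and, because an adjoint is
  unique once the orthocomplement is injective, with taking adjoints. Hence it is an IDA
  morphism \<open>Lin(M\<^sub>1) \<rightarrow> Lin(M\<^sub>2)\<close>, and (T4) makes it map \<open>T(Lin(M\<^sub>1))\<close> into
  \<open>T(Lin(M\<^sub>2))\<close>; likewise conjugation by \<open>k\<inverse>\<close> maps back. \<open>\<Gamma>(k)\<close> is conjugation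
  applied elementwise, so it inherits all the IDA operations and has inverse \<open>\<Gamma>(k\<inverse>)\<close>.\<close>

lemma order_iso_Sup:
  fixes k :: "'a::complete_lattice \<Rightarrow> 'b::complete_lattice"
  assumes "surj k" and le_iff: "\<And>m n. k m \<le> k n \<longleftrightarrow> m \<le> n"
  shows "k (Sup A) = Sup (k ` A)"
proof (rule antisym)
  show "Sup (k ` A) \<le> k (Sup A)"
    by (rule Sup_least) (auto simp: le_iff Sup_upper)
  obtain t where t: "Sup (k ` A) = k t" using \<open>surj k\<close> by (metis surjD)
  have "Sup A \<le> t"
    by (rule Sup_least) (metis Sup_upper imageI le_iff t)
  then show "k (Sup A) \<le> Sup (k ` A)" by (simp add: le_iff t)
qed

lemma order_iso_Inf:
  fixes k :: "'a::complete_lattice \<Rightarrow> 'b::complete_lattice"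
  assumes "surj k" and le_iff: "\<And>m n. k m \<le> k n \<longleftrightarrow> m \<le> n"
  shows "k (Inf A) = Inf (k ` A)"
proof (rule antisym)
  show "k (Inf A) \<le> Inf (k ` A)"
    by (rule Inf_greatest) (auto simp: le_iff Inf_lower)
  obtain t where t: "Inf (k ` A) = k t" using \<open>surj k\<close> by (metis surjD)
  have "t \<le> Inf A"
    by (rule Inf_greatest) (metis Inf_lower imageI le_iff t)
  then show "Inf (k ` A) \<le> k (Inf A)" by (simp add: le_iff t)
qed

lemma complete_oml_inj: "complete_oml perp \<Longrightarrow> inj perp"
  unfolding complete_oml_def by (metis injI)

lemma is_adjoint_unique:
  assumes "inj perp" and "is_adjoint perp f g" and "is_adjoint perp f g'"
  shows "g = g'"
proof
  fix y
  have "x \<le> perp (g y) \<longleftrightarrow> x \<le> perp (g' y)" for x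
    using assms(2,3) unfolding is_adjoint_def by blast
  then have "perp (g y) = perp (g' y)" by (meson order_antisym order_refl)
  then show "g y = g' y" by (rule injD[OF assms(1)])
qed

lemma is_adjoint_adj: "is_Lin perp f \<Longrightarrow> is_adjoint perp f (adj perp f)"
  unfolding is_Lin_def adj_def by (erule someI_ex)

definition conjugate :: "('a \<Rightarrow> 'b) \<Rightarrow> ('a \<Rightarrow> 'a) \<Rightarrow> ('b \<Rightarrow> 'b)" where
  "conjugate k f = k \<circ> f \<circ> inv k"

lemma Gamma_map_conjugate: "Gamma_map k = image (conjugate k)"
  by (auto simp: Gamma_map_def conjugate_def)

lemma conjugate_comp:
  assumes "inj k" shows "conjugate k (f \<circ> g) = conjugate k f \<circ> conjugate k g"
  by (auto simp: conjugate_def assms)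

lemma conjugate_id:
  assumes "surj k" shows "conjugate k id = id"
  by (auto simp: conjugate_def assms surj_f_inv_f)

lemma conjugate_conjugate_inv:
  assumes "bij k" shows "conjugate k (conjugate (inv k) f) = f"
  using assms by (auto simp: conjugate_def bij_is_surj surj_f_inv_f inv_inv_eq)

lemma conjugate_inv_conjugate:
  assumes "bij k" shows "conjugate (inv k) (conjugate k f) = f"
  using assms by (auto simp: conjugate_def bij_is_inj inv_inv_eq)

lemma inj_conjugate:
  assumes "bij k" shows "inj (conjugate k)"
  by (metis assms injI conjugate_inv_conjugate)

lemma image_compositions:
  assumes "\<And>a b. h (a \<circ> b) = h a \<circ> h b"
  shows "h ` {a \<circ> b |a b. a \<in> A \<and> b \<in> B} = {a \<circ> b |a b. a \<in> h ` A \<and> b \<in> h ` B}"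
proof -
  have "h ` {a \<circ> b |a b. a \<in> A \<and> b \<in> B} = {h (a \<circ> b) |a b. a \<in> A \<and> b \<in> B}"
    by blast
  also have "\<dots> = {a \<circ> b |a b. a \<in> h ` A \<and> b \<in> h ` B}"
    unfolding assms by blast
  finally show ?thesis .
qed

lemma bij_betw_Gamma_map:
  assumes "bij k"
    and maps: "conjugate k ` TL1 \<subseteq> TL2" and maps_back: "conjugate (inv k) ` TL2 \<subseteq> TL1"
  shows "bij_betw (Gamma_map k) (Pow TL1) (Pow TL2)"
  unfolding Gamma_map_conjugate
proof (rule bij_betw_imageI)
  show "inj_on (image (conjugate k)) (Pow TL1)"
    using inj_conjugate[OF assms(1)] by (simp add: inj_image_eq_iff inj_on_def)
  show "image (conjugate k) ` Pow TL1 = Pow TL2"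
  proof
    show "image (conjugate k) ` Pow TL1 \<subseteq> Pow TL2" using maps by blast
    show "Pow TL2 \<subseteq> image (conjugate k) ` Pow TL1"
    proof
      fix B assume "B \<in> Pow TL2"
      then have "conjugate (inv k) ` B \<in> Pow TL1" using maps_back by blast
      moreover have "B = conjugate k ` conjugate (inv k) ` B"
        by (simp add: image_image conjugate_conjugate_inv[OF assms(1)])
      ultimately show "B \<in> image (conjugate k) ` Pow TL1" by blast
    qed
  qed
qed

context
  fixes perp1 :: "'a::complete_lattice \<Rightarrow> 'a"
    and perp2 :: "'b::complete_lattice \<Rightarrow> 'b"
    and k :: "'a \<Rightarrow> 'b"
  assumes iso: "ortho_iso perp1 perp2 k"
begin

lemma ortho_iso_bij: "bij k"
  using iso unfolding ortho_iso_def by blast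

lemma ortho_iso_le_iff: "k m \<le> k n \<longleftrightarrow> m \<le> n"
  using iso unfolding ortho_iso_def by blast

lemma ortho_iso_perp: "k (perp1 m) = perp2 (k m)"
  using iso unfolding ortho_iso_def by blast

lemma ortho_iso_f_inv_f [simp]: "k (inv k y) = y"
  by (simp add: bij_is_surj ortho_iso_bij surj_f_inv_f)

lemma ortho_iso_inv_f_f [simp]: "inv k (k x) = x"
  by (simp add: bij_is_inj ortho_iso_bij)

lemma ortho_iso_Sup: "k (Sup A) = Sup (k ` A)"
  by (rule order_iso_Sup[OF bij_is_surj[OF ortho_iso_bij] ortho_iso_le_iff])

lemma ortho_iso_inf: "k (inf x y) = inf (k x) (k y)"
  using order_iso_Inf[OF bij_is_surj[OF ortho_iso_bij] ortho_iso_le_iff, of "{x, y}"] by simp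

lemma ortho_iso_sup: "k (sup x y) = sup (k x) (k y)"
  using ortho_iso_Sup[of "{x, y}"] by simp

lemma ortho_iso_top: "k top = top"
  using ortho_iso_Sup[of UNIV] by (simp add: bij_is_surj ortho_iso_bij)

lemma ortho_iso_inv: "ortho_iso perp2 perp1 (inv k)"
  unfolding ortho_iso_def
proof (intro conjI allI)
  show "bij (inv k)" by (simp add: bij_imp_bij_inv ortho_iso_bij)
  fix m n
  show "m \<le> n \<longleftrightarrow> inv k m \<le> inv k n"
    by (metis ortho_iso_f_inv_f ortho_iso_le_iff)
  show "inv k (perp2 m) = perp1 (inv k m)"
    by (metis ortho_iso_f_inv_f ortho_iso_inv_f_f ortho_iso_perp)
qed

lemma ortho_iso_sasaki: "k (sasaki perp1 m x) = sasaki perp2 (k m) (k x)"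
  unfolding sasaki_def by (simp add: ortho_iso_inf ortho_iso_sup ortho_iso_perp)

lemma conjugate_apply_top: "conjugate k f top = k (f top)"
  by (metis comp_apply conjugate_def ortho_iso_inv_f_f ortho_iso_top)

lemma conjugate_sasaki: "conjugate k (sasaki perp1 m) = sasaki perp2 (k m)"
  by (auto simp: conjugate_def ortho_iso_sasaki)

lemma conjugate_Sup_apply:
  "conjugate k (\<lambda>x. SUP f\<in>F. f x) = (\<lambda>x. SUP f\<in>conjugate k ` F. f x)"
  by (auto simp: conjugate_def ortho_iso_Sup image_image)

lemma is_adjoint_conjugate:
  assumes "is_adjoint perp1 f g"
  shows "is_adjoint perp2 (conjugate k f) (conjugate k g)"
  unfolding is_adjoint_def
proof (intro allI)
  fix x y
  let ?x = "inv k x" and ?y = "inv k y"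
  have "conjugate k f x \<le> perp2 y \<longleftrightarrow> k (f ?x) \<le> k (perp1 ?y)"
    by (simp add: conjugate_def ortho_iso_perp)
  also have "\<dots> \<longleftrightarrow> ?x \<le> perp1 (g ?y)"
    using assms by (simp add: ortho_iso_le_iff is_adjoint_def)
  also have "\<dots> \<longleftrightarrow> k ?x \<le> k (perp1 (g ?y))"
    by (rule ortho_iso_le_iff[symmetric])
  also have "\<dots> \<longleftrightarrow> x \<le> perp2 (conjugate k g y)"
    by (simp add: conjugate_def ortho_iso_perp)
  finally show "conjugate k f x \<le> perp2 y \<longleftrightarrow> x \<le> perp2 (conjugate k g y)" .
qed

lemma is_Lin_conjugate: "is_Lin perp1 f \<Longrightarrow> is_Lin perp2 (conjugate k f)"
  unfolding is_Lin_def using is_adjoint_conjugate by blast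

lemma conjugate_adj:
  assumes "inj perp2" and "is_Lin perp1 f"
  shows "conjugate k (adj perp1 f) = adj perp2 (conjugate k f)"
  using is_adjoint_unique[OF assms(1) is_adjoint_conjugate[OF is_adjoint_adj[OF assms(2)]]
      is_adjoint_adj[OF is_Lin_conjugate[OF assms(2)]]] .

lemma ida_hom_conjugate_Lin:
  assumes "inj perp2"
  shows "ida_hom (Lin perp1) (Lin perp2) (conjugate k)"
  unfolding ida_hom_def Lin_def ida.select_convs
  using is_Lin_conjugate conjugate_Sup_apply conjugate_adj[OF assms]
    conjugate_comp[OF bij_is_inj[OF ortho_iso_bij]] conjugate_id[OF bij_is_surj[OF ortho_iso_bij]]
  by (simp add: conjugate_sasaki conjugate_apply_top ortho_iso_perp)

lemma ida_hom_Gamma_map: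
  assumes "inj perp2"
    and Lin1: "TL1 \<subseteq> {f. is_Lin perp1 f}" and maps: "conjugate k ` TL1 \<subseteq> TL2"
  shows "ida_hom (Pset perp1 TL1) (Pset perp2 TL2) (Gamma_map k)"
  unfolding ida_hom_def Pset_def ida.select_convs Gamma_map_conjugate
proof (intro conjI allI impI ballI)
  fix A assume "A \<in> Pow TL1"
  then have A: "A \<subseteq> TL1" by simp
  then show "conjugate k ` A \<in> Pow TL2" using maps by blast
  have "conjugate k ` adj perp1 ` A = (\<lambda>f. adj perp2 (conjugate k f)) ` A"
    unfolding image_image using A Lin1 conjugate_adj[OF assms(1)] by (intro image_cong) auto
  then show "conjugate k ` adj perp1 ` A = adj perp2 ` conjugate k ` A"
    by (simp add: image_image)
next
  fix A B :: "('a \<Rightarrow> 'a) set"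
  show "conjugate k ` {a \<circ> b |a b. a \<in> A \<and> b \<in> B}
      = {a \<circ> b |a b. a \<in> conjugate k ` A \<and> b \<in> conjugate k ` B}"
    by (rule image_compositions) (rule conjugate_comp[OF bij_is_inj[OF ortho_iso_bij]])
next
  show "conjugate k ` {id} = {id}"
    by (simp add: conjugate_id bij_is_surj ortho_iso_bij)
next
  fix A :: "('a \<Rightarrow> 'a) set"
  have "(SUP a\<in>conjugate k ` A. a top) = k (SUP a\<in>A. a top)"
    by (simp add: image_image conjugate_apply_top ortho_iso_Sup)
  then show "conjugate k ` {sasaki perp1 (perp1 (SUP a\<in>A. a top))}
      = {sasaki perp2 (perp2 (SUP a\<in>conjugate k ` A. a top))}"
    by (simp add: conjugate_sasaki ortho_iso_perp)
qed (rule image_Union)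

end

theorem lemma5p2:
  fixes perp1 :: "'a::complete_lattice \<Rightarrow> 'a"
    and perp2 :: "'b::complete_lattice \<Rightarrow> 'b"
    and TL1 :: "('a \<Rightarrow> 'a) set"
    and TL2 :: "('b \<Rightarrow> 'b) set"
    and k :: "'a \<Rightarrow> 'b"
  assumes M1: "complete_oml perp1"
    and M2: "complete_oml perp2"
    and T1_1: "T1_at (Lin perp1) TL1"
    and T1_2: "T1_at (Lin perp2) TL2"
    and T4_11: "T4_between (Lin perp1) TL1 (Lin perp1) TL1"
    and T4_12: "T4_between (Lin perp1) TL1 (Lin perp2) TL2"
    and T4_21: "T4_between (Lin perp2) TL2 (Lin perp1) TL1"
    and T4_22: "T4_between (Lin perp2) TL2 (Lin perp2) TL2"
    and iso: "ortho_iso perp1 perp2 k"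
  shows "ida_hom (Pset perp1 TL1) (Pset perp2 TL2) (Gamma_map k)
       \<and> bij_betw (Gamma_map k) (ida_carrier (Pset perp1 TL1)) (ida_carrier (Pset perp2 TL2))"
proof -
  \<comment> \<open>Only the two mixed instances of (T4) and (T1) for \<open>Lin(M\<^sub>1)\<close> are needed.\<close>
  have Lin1: "TL1 \<subseteq> {f. is_Lin perp1 f}"
    using T1_1 unfolding T1_at_def Lin_def by simp
  have maps: "conjugate k ` TL1 \<subseteq> TL2"
    using T4_12 ida_hom_conjugate_Lin[OF iso complete_oml_inj[OF M2]]
    unfolding T4_between_def by blast
  have maps_back: "conjugate (inv k) ` TL2 \<subseteq> TL1"
    using T4_21 ida_hom_conjugate_Lin[OF ortho_iso_inv[OF iso] complete_oml_inj[OF M1]]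
    unfolding T4_between_def by blast
  show ?thesis
    using ida_hom_Gamma_map[OF iso complete_oml_inj[OF M2] Lin1 maps]
      bij_betw_Gamma_map[OF ortho_iso_bij[OF iso] maps maps_back]
    by (simp add: Pset_def)
qed

end
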